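(* Let $F:\mathcal C\to\mathcal D$ be a faithful functor and let $\perp$ be an independence relation on $\mathcal D$ satisfying invariance. (1) If $F$ admits $2$-completions with respect to $\perp$ and $\perp$ satisfies existence, then $F^{-1}(\perp)$ satisfies existence. (2) If $F$ admits $1$-completions, $\perp$ satisfies uniqueness, and $F^{-1}(\perp)$ satisfies existence, then $F$ admits $2$-completions with respect to $\perp$.
   Context: A commuting square consists of objects $C,A,B,M$ and morphisms $C\to A$, $C\to B$, $A\to M$, $B\to M$ with equal composites $C\to M$. An independence relation $\perp$ is a class of commuting squares (called independent); write $A\perp^M_C B$. $F^{-1}(\perp)$ consists of the commuting squares of $\mathcal C$ whose image under $F$ is in $\perp$. Invariance: for a square $C\to A,C\to B,A\to M,B\to M$ and any $M\to N$, $A\perp^M_C B$ iff the square with $A\to M\to N$, $B\to M\to N$ is independent. Existence: every span $A\leftarrow C\to B$ can be completed to an independent square. Uniqueness: any two independent squares on the same span $A\leftarrow C\to B$, with tops $M,M'$, can be amalgamated: there are $N$ and $M\to N$, $M'\to N$ such that the two composites $A\to N$ agree and the two composites $B\to N$ agree. For faithful $F$: a $1$-completion of a morphism $f:F(A)\to B$ in $\mathcal D$ is a morphism $g:A\to C$ in $\mathcal C$ together with $h:B\to F(C)$ such that $F(g)=hf$; $F$ admits $1$-completions if every such $f$ has one. A $2$-completion of a commuting $\perp$-independent square $F(C)\xrightarrow{F(c_A)}F(A)$, $F(C)\xrightarrow{F(c_B)}F(B)$, $F(A)\xrightarrow{x}D$, $F(B)\xrightarrow{y}D$ in $\mathcal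 D$ (with $c_A,c_B$ morphisms of $\mathcal C$) is an object $E$ of $\mathcal C$, a morphism $h:D\to F(E)$ and morphisms $f:A\to E$, $g:B\to E$ in $\mathcal C$ with $F(f)=hx$ and $F(g)=hy$; $F$ admits $2$-completions with respect to $\perp$ if every such independent square has a $2$-completion. *)

theory Defs
  imports Main
begin

text \<open>Categories given explicitly by objects, arrows, domain, codomain,
  composition (cmp g f = g after f) and identities.\<close>

record ('o, 'm) cat =
  Obj :: "'o set"
  Arr :: "'m set"
  dom :: "'m \<Rightarrow> 'o"
  cod :: "'m \<Rightarrow> 'o"
  cmp :: "'m \<Rightarrow> 'm \<Rightarrow> 'm"
  idm :: "'o \<Rightarrow> 'm"

definition category :: "('o, 'm) cat \<Rightarrow> bool" where
  "category C \<longleftrightarrow>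
     (\<forall>f\<in>Arr C. dom C f \<in> Obj C \<and> cod C f \<in> Obj C) \<and>
     (\<forall>a\<in>Obj C. idm C a \<in> Arr C \<and> dom C (idm C a) = a \<and> cod C (idm C a) = a) \<and>
     (\<forall>f\<in>Arr C. \<forall>g\<in>Arr C. cod C f = dom C g \<longrightarrow>
        cmp C g f \<in> Arr C \<and> dom C (cmp C g f) = dom C f \<and> cod C (cmp C g f) = cod C g) \<and>
     (\<forall>f\<in>Arr C. cmp C (idm C (cod C f)) f = f \<and> cmp C f (idm C (dom C f)) = f) \<and>
     (\<forall>f\<in>Arr C. \<forall>g\<in>Arr C. \<forall>h\<in>Arr C. cod C f = dom C g \<and> cod C g = dom C h \<longrightarrow>
        cmp C h (cmp C g f) = cmp C (cmp C h g) f)"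

definition is_functor :: "('o, 'm) cat \<Rightarrow> ('p, 'n) cat \<Rightarrow> ('o \<Rightarrow> 'p) \<Rightarrow> ('m \<Rightarrow> 'n) \<Rightarrow> bool" where
  "is_functor C D Fo Fa \<longleftrightarrow> category C \<and> category D \<and>
     (\<forall>a\<in>Obj C. Fo a \<in> Obj D) \<and>
     (\<forall>f\<in>Arr C. Fa f \<in> Arr D \<and> dom D (Fa f) = Fo (dom C f) \<and> cod D (Fa f) = Fo (cod C f)) \<and>
     (\<forall>a\<in>Obj C. Fa (idm C a) = idm D (Fo a)) \<and>
     (\<forall>f\<in>Arr C. \<forall>g\<in>Arr C. cod C f = dom C g \<longrightarrow> Fa (cmp C g f) = cmp D (Fa g) (Fa f))"

definition faithful :: "('o, 'm) cat \<Rightarrow> ('p, 'n) cat \<Rightarrow> ('o \<Rightarrow> 'p) \<Rightarrow> ('m \<Rightarrow> 'n) \<Rightarrow> bool" where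
  "faithful C D Fo Fa \<longleftrightarrow> is_functor C D Fo Fa \<and>
     (\<forall>f\<in>Arr C. \<forall>g\<in>Arr C. dom C f = dom C g \<and> cod C f = cod C g \<and> Fa f = Fa g \<longrightarrow> f = g)"

text \<open>A square (cA, cB, aM, bM) consists of cA : C \<rightarrow> A, cB : C \<rightarrow> B, aM : A \<rightarrow> M, bM : B \<rightarrow> M.\<close>

type_synonym 'm square = "'m \<times> 'm \<times> 'm \<times> 'm"

definition commuting_square :: "('o, 'm) cat \<Rightarrow> 'm square \<Rightarrow> bool" where
  "commuting_square C s \<longleftrightarrow> (case s of (cA, cB, aM, bM) \<Rightarrow>
     cA \<in> Arr C \<and> cB \<in> Arr C \<and> aM \<in> Arr C \<and> bM \<in> Arr C \<and>
     dom C cA = dom C cB \<and> dom C aM = cod C cA \<and> dom C bM = cod C cB \<and>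
     cod C aM = cod C bM \<and> cmp C aM cA = cmp C bM cB)"

definition indep_rel :: "('o, 'm) cat \<Rightarrow> ('m square \<Rightarrow> bool) \<Rightarrow> bool" where
  "indep_rel C I \<longleftrightarrow> (\<forall>s. I s \<longrightarrow> commuting_square C s)"

definition invariance :: "('o, 'm) cat \<Rightarrow> ('m square \<Rightarrow> bool) \<Rightarrow> bool" where
  "invariance C I \<longleftrightarrow> (\<forall>cA cB aM bM n.
     commuting_square C (cA, cB, aM, bM) \<and> n \<in> Arr C \<and> dom C n = cod C aM \<longrightarrow>
     (I (cA, cB, aM, bM) \<longleftrightarrow> I (cA, cB, cmp C n aM, cmp C n bM)))"

definition existence :: "('o, 'm) cat \<Rightarrow> ('m square \<Rightarrow> bool) \<Rightarrow> bool" where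
  "existence C I \<longleftrightarrow> (\<forall>cA\<in>Arr C. \<forall>cB\<in>Arr C. dom C cA = dom C cB \<longrightarrow>
     (\<exists>aM bM. I (cA, cB, aM, bM)))"

definition uniqueness :: "('o, 'm) cat \<Rightarrow> ('m square \<Rightarrow> bool) \<Rightarrow> bool" where
  "uniqueness C I \<longleftrightarrow> (\<forall>cA cB aM bM aM' bM'.
     I (cA, cB, aM, bM) \<and> I (cA, cB, aM', bM') \<longrightarrow>
     (\<exists>n n'. n \<in> Arr C \<and> n' \<in> Arr C \<and> dom C n = cod C aM \<and> dom C n' = cod C aM' \<and>
        cod C n = cod C n' \<and>
        cmp C n aM = cmp C n' aM' \<and> cmp C n bM = cmp C n' bM'))"

definition preim_rel :: "('o, 'm) cat \<Rightarrow> ('m \<Rightarrow> 'n) \<Rightarrow> ('n square \<Rightarrow> bool) \<Rightarrow> 'm square \<Rightarrow> bool" where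
  "preim_rel C Fa I s \<longleftrightarrow> commuting_square C s \<and>
     (case s of (cA, cB, aM, bM) \<Rightarrow> I (Fa cA, Fa cB, Fa aM, Fa bM))"

definition admits_1_completions ::
  "('o, 'm) cat \<Rightarrow> ('p, 'n) cat \<Rightarrow> ('o \<Rightarrow> 'p) \<Rightarrow> ('m \<Rightarrow> 'n) \<Rightarrow> bool" where
  "admits_1_completions C D Fo Fa \<longleftrightarrow> (\<forall>A\<in>Obj C. \<forall>f\<in>Arr D. dom D f = Fo A \<longrightarrow>
     (\<exists>g h. g \<in> Arr C \<and> dom C g = A \<and> h \<in> Arr D \<and> dom D h = cod D f \<and>
        cod D h = Fo (cod C g) \<and> Fa g = cmp D h f))"

definition admits_2_completions ::
  "('o, 'm) cat \<Rightarrow> ('p, 'n) cat \<Rightarrow> ('o \<Rightarrow> 'p) \<Rightarrow> ('m \<Rightarrow> 'n) \<Rightarrow> ('n square \<Rightarrow> bool) \<Rightarrow> bool" where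
  "admits_2_completions C D Fo Fa I \<longleftrightarrow> (\<forall>cA\<in>Arr C. \<forall>cB\<in>Arr C. \<forall>x y.
     dom C cA = dom C cB \<and> I (Fa cA, Fa cB, x, y) \<longrightarrow>
     (\<exists>E h f g. E \<in> Obj C \<and> h \<in> Arr D \<and> dom D h = cod D x \<and> cod D h = Fo E \<and>
        f \<in> Arr C \<and> dom C f = cod C cA \<and> cod C f = E \<and>
        g \<in> Arr C \<and> dom C g = cod C cB \<and> cod C g = E \<and>
        Fa f = cmp D h x \<and> Fa g = cmp D h y))"

end

theory Submission
  imports Defs
begin

text \<open>For (1), complete an independent square on the image of a span in \<open>C\<close> and lift the
  completion to \<open>C\<close>: invariance keeps the lifted square independent, and faithfulness makes it
  commute in \<open>C\<close>. For (2), given an independent square \<open>x, y\<close> on the image of a span, take an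
  \<open>F\<^sup>-\<^sup>1(\<perp>)\<close>-independent square \<open>aM, bM\<close> on the span itself, amalgamate its image with \<open>x, y\<close> by
  uniqueness, and pull the amalgamating arrow out of the image of \<open>F\<close> by a 1-completion.\<close>

lemma category_comp:
  assumes "category C" "f \<in> Arr C" "g \<in> Arr C" "cod C f = dom C g"
  shows "cmp C g f \<in> Arr C" "dom C (cmp C g f) = dom C f" "cod C (cmp C g f) = cod C g"
  using assms unfolding category_def by blast+

lemma category_assoc:
  assumes "category C" "f \<in> Arr C" "g \<in> Arr C" "h \<in> Arr C"
    and "cod C f = dom C g" "cod C g = dom C h"
  shows "cmp C h (cmp C g f) = cmp C (cmp C h g) f"
  using assms unfolding category_def by blast

lemma category_cod_obj: "category C \<Longrightarrow> f \<in> Arr C \<Longrightarrow> cod C f \<in> Obj C"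
  unfolding category_def by blast

lemma category_comp_eq_postcomp:
  assumes "category C" "u \<in> Arr C" "v \<in> Arr C" "n \<in> Arr C" "n' \<in> Arr C" "h \<in> Arr C"
    and "cod C u = dom C n" "cod C v = dom C n'" "cod C n = dom C h" "cod C n' = dom C h"
    and "cmp C n u = cmp C n' v"
  shows "cmp C (cmp C h n) u = cmp C (cmp C h n') v"
  using assms category_assoc[of C u n h] category_assoc[of C v n' h] by simp

lemma functor_categories: "is_functor C D Fo Fa \<Longrightarrow> category C \<and> category D"
  unfolding is_functor_def by blast

lemma functor_arr:
  assumes "is_functor C D Fo Fa" "f \<in> Arr C"
  shows "Fa f \<in> Arr D" "dom D (Fa f) = Fo (dom C f)" "cod D (Fa f) = Fo (cod C f)"
  using assms unfolding is_functor_def by blast+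

lemma functor_comp:
  "is_functor C D Fo Fa \<Longrightarrow> f \<in> Arr C \<Longrightarrow> g \<in> Arr C \<Longrightarrow> cod C f = dom C g
    \<Longrightarrow> Fa (cmp C g f) = cmp D (Fa g) (Fa f)"
  unfolding is_functor_def by blast

lemma faithful_reflects_commuting_square:
  assumes "faithful C D Fo Fa"
    and "cA \<in> Arr C" "cB \<in> Arr C" "aM \<in> Arr C" "bM \<in> Arr C"
    and "dom C cA = dom C cB" "dom C aM = cod C cA" "dom C bM = cod C cB" "cod C aM = cod C bM"
    and "commuting_square D (Fa cA, Fa cB, Fa aM, Fa bM)"
  shows "commuting_square C (cA, cB, aM, bM)"
proof -
  have F: "is_functor C D Fo Fa" using assms(1) unfolding faithful_def by blast
  have "category C" using functor_categories[OF F] by blast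
  have "Fa (cmp C aM cA) = Fa (cmp C bM cB)"
    using assms(2-10) functor_comp[OF F] unfolding commuting_square_def by auto
  moreover note category_comp[OF \<open>category C\<close>, of cA aM] category_comp[OF \<open>category C\<close>, of cB bM]
  ultimately have "cmp C aM cA = cmp C bM cB"
    using assms(1-9) unfolding faithful_def by metis
  then show ?thesis
    using assms(2-9) unfolding commuting_square_def by simp
qed

lemma existence_preim_rel_if_2_completions:
  assumes "faithful C D Fo Fa" "indep_rel D I" "invariance D I"
    and "admits_2_completions C D Fo Fa I" "existence D I"
  shows "existence C (preim_rel C Fa I)"
  unfolding existence_def
proof (intro ballI impI)
  fix cA cB assume cA: "cA \<in> Arr C" and cB: "cB \<in> Arr C" and span: "dom C cA = dom C cB"
  have F: "is_functor C D Fo Fa" using assms(1) unfolding faithful_def by blast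
  obtain x y where Ixy: "I (Fa cA, Fa cB, x, y)"
    using assms(5) functor_arr[OF F cA] functor_arr[OF F cB] span
    unfolding existence_def by metis
  then obtain E h f g where h: "h \<in> Arr D" "dom D h = cod D x"
    and f: "f \<in> Arr C" "dom C f = cod C cA" "cod C f = E" "Fa f = cmp D h x"
    and g: "g \<in> Arr C" "dom C g = cod C cB" "cod C g = E" "Fa g = cmp D h y"
    using assms(4) cA cB span unfolding admits_2_completions_def by blast
  have "commuting_square D (Fa cA, Fa cB, x, y)"
    using assms(2) Ixy unfolding indep_rel_def by blast
  then have Ifg: "I (Fa cA, Fa cB, Fa f, Fa g)"
    using assms(3) Ixy h f g unfolding invariance_def by auto
  then have "commuting_square D (Fa cA, Fa cB, Fa f, Fa g)"
    using assms(2) unfolding indep_rel_def by blast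
  then have "commuting_square C (cA, cB, f, g)"
    using faithful_reflects_commuting_square[OF assms(1) cA cB f(1) g(1)] span f g by simp
  with Ifg show "\<exists>aM bM. preim_rel C Fa I (cA, cB, aM, bM)"
    unfolding preim_rel_def by auto
qed

lemma admits_2_completions_if_1_completions:
  assumes "is_functor C D Fo Fa" "indep_rel D I"
    and "admits_1_completions C D Fo Fa" "uniqueness D I" "existence C (preim_rel C Fa I)"
  shows "admits_2_completions C D Fo Fa I"
  unfolding admits_2_completions_def
proof (intro ballI allI impI)
  fix cA cB x y
  assume cA: "cA \<in> Arr C" and cB: "cB \<in> Arr C" and "dom C cA = dom C cB \<and> I (Fa cA, Fa cB, x, y)"
  then have span: "dom C cA = dom C cB" and Ixy: "I (Fa cA, Fa cB, x, y)" by simp_all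
  have cC: "category C" and cD: "category D" using functor_categories[OF assms(1)] by simp_all
  obtain aM bM where "preim_rel C Fa I (cA, cB, aM, bM)"
    using assms(5) cA cB span unfolding existence_def by blast
  then have sq: "commuting_square C (cA, cB, aM, bM)" and IM: "I (Fa cA, Fa cB, Fa aM, Fa bM)"
    unfolding preim_rel_def by simp_all
  then have aM: "aM \<in> Arr C" "dom C aM = cod C cA" and bM: "bM \<in> Arr C" "dom C bM = cod C cB"
    and M: "cod C bM = cod C aM"
    unfolding commuting_square_def by simp_all
  have "commuting_square D (Fa cA, Fa cB, x, y)"
    using assms(2) Ixy unfolding indep_rel_def by blast
  then have x: "x \<in> Arr D" and y: "y \<in> Arr D" and xy: "cod D y = cod D x"
    unfolding commuting_square_def by simp_all
  obtain n n' where n: "n \<in> Arr D" "dom D n = cod D x"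
    and n': "n' \<in> Arr D" "dom D n' = Fo (cod C aM)" "cod D n' = cod D n"
    and amalg: "cmp D n x = cmp D n' (Fa aM)" "cmp D n y = cmp D n' (Fa bM)"
    using assms(4) Ixy IM functor_arr[OF assms(1) aM(1)] unfolding uniqueness_def by metis
  obtain k h where k: "k \<in> Arr C" "dom C k = cod C aM"
    and h: "h \<in> Arr D" "dom D h = cod D n'" "cod D h = Fo (cod C k)" "Fa k = cmp D h n'"
    using assms(3) category_cod_obj[OF cC aM(1)] n'
    unfolding admits_1_completions_def by metis
  have "Fa (cmp C k aM) = cmp D (cmp D h n) x"
    using category_comp_eq_postcomp[OF cD x _ n(1) n' (1) h(1)] amalg(1)
      functor_comp[OF assms(1) aM(1) k(1)] functor_arr[OF assms(1) aM(1)] k n n' h by simp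
  moreover have "Fa (cmp C k bM) = cmp D (cmp D h n) y"
    using category_comp_eq_postcomp[OF cD y _ n(1) n' (1) h(1)] amalg(2)
      functor_comp[OF assms(1) bM(1) k(1)] functor_arr[OF assms(1) bM(1)] M k n n' h xy by simp
  ultimately show "\<exists>E h f g. E \<in> Obj C \<and> h \<in> Arr D \<and> dom D h = cod D x \<and> cod D h = Fo E \<and>
        f \<in> Arr C \<and> dom C f = cod C cA \<and> cod C f = E \<and>
        g \<in> Arr C \<and> dom C g = cod C cB \<and> cod C g = E \<and>
        Fa f = cmp D h x \<and> Fa g = cmp D h y"
    using category_cod_obj[OF cC k(1)] category_comp[OF cD n(1) h(1)]
      category_comp[OF cC aM(1) k(1)] category_comp[OF cC bM(1) k(1)] aM bM M k n n' h
    by (intro exI[of _ "cod C k"] exI[of _ "cmp D h n"] exI[of _ "cmp C k aM"] exI[of _ "cmp C k bM"])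
       auto
qed

theorem theorem5p7:
  fixes C :: "('o, 'm) cat" and D :: "('p, 'n) cat"
    and Fo :: "'o \<Rightarrow> 'p" and Fa :: "'m \<Rightarrow> 'n" and I :: "'n square \<Rightarrow> bool"
  assumes "faithful C D Fo Fa"
    and "indep_rel D I"
    and "invariance D I"
  shows "(admits_2_completions C D Fo Fa I \<and> existence D I \<longrightarrow> existence C (preim_rel C Fa I))
       \<and> (admits_1_completions C D Fo Fa \<and> uniqueness D I \<and> existence C (preim_rel C Fa I)
            \<longrightarrow> admits_2_completions C D Fo Fa I)"
proof -
  have "is_functor C D Fo Fa" using assms(1) unfolding faithful_def by blast
  then show ?thesis
    using existence_preim_rel_if_2_completions[OF assms]
      admits_2_completions_if_1_completions[OF _ assms(2)] by blast
qed

end
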